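(* Assume the setting and the nsCRAIG recurrence described in the context, and let $k\ge1$ be such that $Q_k,B_k,H_k$ are defined. Then $H_k$ is nonsingular, and the vector $p^{(k)}=Q_ky_k$ with $y_k=-B_k^{-1}H_k^{-1}(\beta_1e_1)$ coincides with the $k$-th iterate of the full orthogonalization method (FOM), started from the zero initial guess and preconditioned with $N$, applied to the Schur-complement equation $Sp=-b$, $S=A^TM^{-1}A+C$; that is, $p^{(k)}$ is the unique $p\in\mathcal{K}_k:=\operatorname{span}\{N^{-1}b,(N^{-1}S)N^{-1}b,\dots,(N^{-1}S)^{k-1}N^{-1}b\}$ with $(-b-Sp)^Tx=0$ for all $x\in\mathcal{K}_k$. Moreover the nsCRAIG iterate $u^{(k)}$ satisfies $u^{(k)}=-M^{-1}Ap^{(k)}$.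
   Context: Setting: $M\in\mathbb{R}^{m\times m}$ is nonsymmetric and positive definite ($x^TMx>0$ for all $x\ne0$); $A\in\mathbb{R}^{m\times n}$ ($n\le m$) has full column rank; $C\in\mathbb{R}^{n\times n}$ is symmetric positive semidefinite; $b\in\mathbb{R}^n$ is nonzero; $N\in\mathbb{R}^{n\times n}$ is symmetric positive definite. Write $\|x\|_G=(x^TGx)^{1/2}$ for $G$ positive definite (for nonsymmetric $M$ this is the norm of its symmetric part). The generalized saddle point system is $Mu+Ap=0$, $A^Tu-Cp=b$, with unique solution $(u_*,p_* )$; $S=A^TM^{-1}A+C$. nsCRAIG recurrence (exact arithmetic): Initialization: $\beta_1=\|b\|_{N^{-1}}$, $q_1=N^{-1}b/\beta_1$, $Q_1=[q_1]$, $r_1=q_1$, $w_1=M^{-1}Aq_1$, $s_1=Cr_1$, $\alpha_1=(w_1^TMw_1+r_1^Ts_1)^{1/2}$, $v_1=w_1/\alpha_1$, $t_1=s_1/\alpha_1$, $\chi_1=\beta_1/\alpha_1$. For $k=1,2,\dots$: $\hat g_k=N^{-1}(A^Tv_k+t_k)$, $h_k=Q_k^TN\hat g_k\in\mathbb{R}^k$, $g_k=\hat g_k-Q_kh_k$, $\beta_{k+1}=\|g_k\|_N$; if $\beta_{k+1}=0$ the recurrence stops; otherwise $q_{k+1}=g_k/\beta_{k+1}$, $Q_{k+1}=[Q_k,q_{k+1}]$, $w_{k+1}=M^{-1}Aq_{k+1}-\beta_{k+1}v_k$, $r_{k+1}=q_{k+1}-(\beta_{k+1}/\alpha_k)r_k$,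 $s_{k+1}=Cr_{k+1}$, $\alpha_{k+1}=(w_{k+1}^TMw_{k+1}+r_{k+1}^Ts_{k+1})^{1/2}$, $v_{k+1}=w_{k+1}/\alpha_{k+1}$, $t_{k+1}=s_{k+1}/\alpha_{k+1}$, $\chi_{k+1}=-(\beta_{k+1}/\alpha_{k+1})\chi_k$. Matrices: $B_k\in\mathbb{R}^{k\times k}$ upper bidiagonal with $(B_k)_{ii}=\alpha_i$, $(B_k)_{i,i+1}=\beta_{i+1}$; $H_k\in\mathbb{R}^{k\times k}$ upper Hessenberg whose $j$-th column has entries $(H_k)_{ij}=(h_j)_i$ for $i\le j$, $(H_k)_{j+1,j}=\beta_{j+1}$ (if $j<k$), and zeros otherwise. The nsCRAIG iterates at step $k$ are $y_k=-B_k^{-1}H_k^{-1}(\beta_1e_1)$, $p^{(k)}=Q_ky_k$, $u^{(k)}=-M^{-1}Ap^{(k)}$, with $e_1$ the first unit vector of $\mathbb{R}^k$. *)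

theory Defs
  imports Complex_Main "Jordan_Normal_Form.Gauss_Jordan_Elimination" "Jordan_Normal_Form.DL_Rank"
begin

definition minv :: "real mat \<Rightarrow> real mat" where
  "minv G = the (mat_inverse G)"

definition gnorm :: "real mat \<Rightarrow> real vec \<Rightarrow> real" where
  "gnorm G x = sqrt (x \<bullet> (G *\<^sub>v x))"

text \<open>State of the nsCRAIG recurrence after step k (k \<ge> 1):
  (q_1..q_k, alpha_1..alpha_k, beta_1..beta_k, h_1..h_(k-1), v_k, t_k, r_k).
  Lists are 0-based: element i of a list is the quantity with paper index i+1.\<close>
type_synonym craig_state =
  "real vec list \<times> real list \<times> real list \<times> real vec list \<times> real vec \<times> real vec \<times> real vec"

definition craig_init :: "real mat \<Rightarrow> real mat \<Rightarrow> real mat \<Rightarrow> real mat \<Rightarrow> real vec \<Rightarrow> craig_state" where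
  "craig_init M A C N b =
    (let \<beta>1 = gnorm (minv N) b;
         q1 = (1 / \<beta>1) \<cdot>\<^sub>v (minv N *\<^sub>v b);
         r1 = q1;
         w1 = minv M *\<^sub>v (A *\<^sub>v q1);
         s1 = C *\<^sub>v r1;
         \<alpha>1 = sqrt (w1 \<bullet> (M *\<^sub>v w1) + r1 \<bullet> s1);
         v1 = (1 / \<alpha>1) \<cdot>\<^sub>v w1;
         t1 = (1 / \<alpha>1) \<cdot>\<^sub>v s1
     in ([q1], [\<alpha>1], [\<beta>1], [], v1, t1, r1))"

definition craig_Q :: "nat \<Rightarrow> craig_state \<Rightarrow> real mat" where
  "craig_Q n st = (case st of (qs, als, bes, hs, v, t, r) \<Rightarrow> mat_of_cols n qs)"

definition craig_ghat :: "real mat \<Rightarrow> real mat \<Rightarrow> craig_state \<Rightarrow> real vec" where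
  "craig_ghat A N st = (case st of (qs, als, bes, hs, v, t, r) \<Rightarrow>
     minv N *\<^sub>v (transpose_mat A *\<^sub>v v + t))"

definition craig_h :: "real mat \<Rightarrow> real mat \<Rightarrow> craig_state \<Rightarrow> real vec" where
  "craig_h A N st = transpose_mat (craig_Q (dim_row N) st) *\<^sub>v (N *\<^sub>v craig_ghat A N st)"

text \<open>One step k \<rightarrow> k+1 of the recurrence (computed without the stopping test;
  the stopping test beta_(k+1) = 0 is imposed as a hypothesis where needed).\<close>
definition craig_step :: "real mat \<Rightarrow> real mat \<Rightarrow> real mat \<Rightarrow> real mat \<Rightarrow> craig_state \<Rightarrow> craig_state" where
  "craig_step M A C N st = (case st of (qs, als, bes, hs, v, t, r) \<Rightarrow>
     (let gh = craig_ghat A N st;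
          h = craig_h A N st;
          g = gh - craig_Q (dim_row N) st *\<^sub>v h;
          \<beta>' = gnorm N g;
          q' = (1 / \<beta>') \<cdot>\<^sub>v g;
          w' = minv M *\<^sub>v (A *\<^sub>v q') - \<beta>' \<cdot>\<^sub>v v;
          r' = q' - (\<beta>' / last als) \<cdot>\<^sub>v r;
          s' = C *\<^sub>v r';
          \<alpha>' = sqrt (w' \<bullet> (M *\<^sub>v w') + r' \<bullet> s');
          v' = (1 / \<alpha>') \<cdot>\<^sub>v w';
          t' = (1 / \<alpha>') \<cdot>\<^sub>v s'
      in (qs @ [q'], als @ [\<alpha>'], bes @ [\<beta>'], hs @ [h], v', t', r')))"

definition craig_state :: "real mat \<Rightarrow> real mat \<Rightarrow> real mat \<Rightarrow> real mat \<Rightarrow> real vec \<Rightarrow> nat \<Rightarrow> craig_state" where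
  "craig_state M A C N b k = (craig_step M A C N ^^ (k - 1)) (craig_init M A C N b)"

definition craig_alpha :: "real mat \<Rightarrow> real mat \<Rightarrow> real mat \<Rightarrow> real mat \<Rightarrow> real vec \<Rightarrow> nat \<Rightarrow> real" where
  "craig_alpha M A C N b j = (case craig_state M A C N b j of (qs, als, bes, hs, v, t, r) \<Rightarrow> last als)"

text \<open>beta_j for j \<ge> 2 is produced in step j-1 (beta_1 at initialization).\<close>
definition craig_beta :: "real mat \<Rightarrow> real mat \<Rightarrow> real mat \<Rightarrow> real mat \<Rightarrow> real vec \<Rightarrow> nat \<Rightarrow> real" where
  "craig_beta M A C N b j = (case craig_state M A C N b j of (qs, als, bes, hs, v, t, r) \<Rightarrow> last bes)"

definition nscraig_Q :: "real mat \<Rightarrow> real mat \<Rightarrow> real mat \<Rightarrow> real mat \<Rightarrow> real vec \<Rightarrow> nat \<Rightarrow> real mat" where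
  "nscraig_Q M A C N b k = craig_Q (dim_vec b) (craig_state M A C N b k)"

definition nscraig_B :: "real mat \<Rightarrow> real mat \<Rightarrow> real mat \<Rightarrow> real mat \<Rightarrow> real vec \<Rightarrow> nat \<Rightarrow> real mat" where
  "nscraig_B M A C N b k = mat k k (\<lambda>(i, j).
     if i = j then craig_alpha M A C N b (i + 1)
     else if j = i + 1 then craig_beta M A C N b (i + 2)
     else 0)"

definition nscraig_H :: "real mat \<Rightarrow> real mat \<Rightarrow> real mat \<Rightarrow> real mat \<Rightarrow> real vec \<Rightarrow> nat \<Rightarrow> real mat" where
  "nscraig_H M A C N b k = mat k k (\<lambda>(i, j).
     if i \<le> j then craig_h A N (craig_state M A C N b (j + 1)) $ i
     else if i = j + 1 then craig_beta M A C N b (j + 2)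
     else 0)"

definition nscraig_y :: "real mat \<Rightarrow> real mat \<Rightarrow> real mat \<Rightarrow> real mat \<Rightarrow> real vec \<Rightarrow> nat \<Rightarrow> real vec" where
  "nscraig_y M A C N b k =
     - (minv (nscraig_B M A C N b k) *\<^sub>v (minv (nscraig_H M A C N b k) *\<^sub>v
          (craig_beta M A C N b 1 \<cdot>\<^sub>v unit_vec k 0)))"

definition nscraig_p :: "real mat \<Rightarrow> real mat \<Rightarrow> real mat \<Rightarrow> real mat \<Rightarrow> real vec \<Rightarrow> nat \<Rightarrow> real vec" where
  "nscraig_p M A C N b k = nscraig_Q M A C N b k *\<^sub>v nscraig_y M A C N b k"

definition nscraig_u :: "real mat \<Rightarrow> real mat \<Rightarrow> real mat \<Rightarrow> real mat \<Rightarrow> real vec \<Rightarrow> nat \<Rightarrow> real vec" where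
  "nscraig_u M A C N b k = - (minv M *\<^sub>v (A *\<^sub>v nscraig_p M A C N b k))"

definition schur :: "real mat \<Rightarrow> real mat \<Rightarrow> real mat \<Rightarrow> real mat" where
  "schur M A C = transpose_mat A * minv M * A + C"

definition krylov :: "real mat \<Rightarrow> real mat \<Rightarrow> real vec \<Rightarrow> nat \<Rightarrow> real vec set" where
  "krylov N S b k = LinearCombinations.module.span class_ring (module_vec TYPE(real) (dim_vec b))
     ((\<lambda>i. ((minv N * S) ^\<^sub>m i) *\<^sub>v (minv N *\<^sub>v b)) ` {0..<k})"

end

theory Submission
  imports Defs
begin

text \<open>The q_j generated by nsCRAIG are the vectors of the Arnoldi process for N^(-1) S in the
  N-inner product, written in terms of auxiliary vectors r_j with S r_j = \<alpha>_j N ghat_j and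
  q_j = r_j + (\<beta>_j / \<alpha>_(j-1)) r_(j-1). Hence they are N-orthonormal, span the preconditioned
  Krylov space K_k, and the Galerkin matrix factors as Q_k^T S Q_k = H_k B_k. Since x^T S x > 0
  for x \<noteq> 0, this matrix is nonsingular, so H_k and B_k are; and as Q_k^T b = \<beta>_1 e_1, the
  vector y_k solves the Galerkin system Q_k^T S Q_k y = -Q_k^T b, which is exactly the FOM
  condition on K_k.\<close>

lemma mult_mat_vec_zero:
  "(A :: 'a :: semiring_0 mat) \<in> carrier_mat nr nc \<Longrightarrow> A *\<^sub>v 0\<^sub>v nc = 0\<^sub>v nr"
  by (rule eq_vecI) (auto simp: row_def scalar_prod_def)

lemma mult_mat_vec_uminus:
  "(A :: 'a :: comm_ring_1 mat) \<in> carrier_mat nr nc \<Longrightarrow> v \<in> carrier_vec nc \<Longrightarrow> A *\<^sub>v (- v) = - (A *\<^sub>v v)"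
  by (rule eq_vecI) (auto simp: scalar_prod_def sum_negf)

lemma mult_mat_vec_right_inverse:
  "(G :: 'a :: semiring_1 mat) \<in> carrier_mat d d \<Longrightarrow> H \<in> carrier_mat d d \<Longrightarrow> G * H = 1\<^sub>m d \<Longrightarrow>
   w \<in> carrier_vec d \<Longrightarrow> G *\<^sub>v (H *\<^sub>v w) = w"
  by (metis assoc_mult_mat_vec one_mult_mat_vec)

lemma pow_mat_Suc_left:
  assumes A: "(A :: 'a :: semiring_1 mat) \<in> carrier_mat d d"
  shows "A ^\<^sub>m Suc i = A * A ^\<^sub>m i"
proof (induction i)
  case 0
  show ?case using A by simp
next
  case (Suc i)
  have "A ^\<^sub>m Suc (Suc i) = (A * A ^\<^sub>m i) * A" using Suc by simp
  also have "\<dots> = A * (A ^\<^sub>m i * A)" using A by (simp add: assoc_mult_mat[of _ d d _ d _ d])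
  finally show ?case by simp
qed

lemma scalar_prod_transpose_mult_mat_vec:
  assumes A: "A \<in> carrier_mat nr nc" and x: "x \<in> carrier_vec nc" and y: "y \<in> carrier_vec nr"
  shows "x \<bullet> (transpose_mat A *\<^sub>v y) = (A *\<^sub>v x) \<bullet> (y :: 'a :: comm_ring vec)"
proof -
  have "x \<bullet> (transpose_mat A *\<^sub>v y) = (transpose_mat A *\<^sub>v y) \<bullet> x"
    by (rule comm_scalar_prod[of _ nc]) (use A x y in auto)
  also have "\<dots> = y \<bullet> (A *\<^sub>v x)" by (rule transpose_vec_mult_scalar[OF A x y])
  also have "\<dots> = (A *\<^sub>v x) \<bullet> y" by (rule comm_scalar_prod[of _ nr]) (use A x y in auto)
  finally show ?thesis .
qed

lemma scalar_prod_mult_mat_vec_cols: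
  fixes Q :: "'a :: comm_ring mat"
  assumes x: "x \<in> carrier_vec nr" and Q: "Q \<in> carrier_mat nr nc" and y: "y \<in> carrier_vec nc"
  shows "x \<bullet> (Q *\<^sub>v y) = (\<Sum>c<nc. (col Q c \<bullet> x) * y $ c)"
proof -
  have "x \<bullet> (Q *\<^sub>v y) = (transpose_mat Q *\<^sub>v x) \<bullet> y"
    using transpose_vec_mult_scalar[OF Q y x] by simp
  also have "\<dots> = (\<Sum>c<nc. (transpose_mat Q *\<^sub>v x) $ c * y $ c)"
    using y Q unfolding scalar_prod_def by (auto intro: sum.cong)
  also have "\<dots> = (\<Sum>c<nc. (col Q c \<bullet> x) * y $ c)"
    using Q by (intro sum.cong) (auto simp: row_transpose)
  finally show ?thesis .
qed

lemma minv_inverse: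
  assumes G: "G \<in> carrier_mat d d" and det: "det G \<noteq> 0"
  shows "minv G \<in> carrier_mat d d" "G * minv G = 1\<^sub>m d" "minv G * G = 1\<^sub>m d"
proof -
  have "G \<in> Units (ring_mat TYPE(real) d undefined)" by (rule det_non_zero_imp_unit[OF G det])
  then obtain B where "mat_inverse G = Some B"
    using mat_inverse(1)[OF G, of undefined] by (cases "mat_inverse G") auto
  then show "minv G \<in> carrier_mat d d" "G * minv G = 1\<^sub>m d" "minv G * G = 1\<^sub>m d"
    using mat_inverse(2)[OF G] unfolding minv_def by auto
qed

lemma invertible_mat_if_det_nonzero:
  fixes G :: "real mat"
  assumes G: "G \<in> carrier_mat d d" and det: "det G \<noteq> 0"
  shows "invertible_mat G"
  unfolding invertible_mat_def inverts_mat_def square_mat.simps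
  using minv_inverse[OF G det] G by (auto intro!: exI[of _ "minv G"])

lemma inj_mult_mat_vec_if_full_rank:
  fixes A :: "real mat"
  assumes A: "A \<in> carrier_mat m n" and rank: "vec_space.rank m A = n"
  shows "\<forall>x \<in> carrier_vec n. A *\<^sub>v x = 0\<^sub>v m \<longrightarrow> x = 0\<^sub>v n"
proof -
  interpret vec_space "TYPE(real)" m .
  have "distinct (cols A)"
  proof (rule ccontr)
    assume nd: "\<not> distinct (cols A)"
    obtain S where S: "maximal S (\<lambda>T. T \<subseteq> set (cols A) \<and> lin_indpt T)"
      using maximal_exists[of "\<lambda>T. T \<subseteq> set (cols A) \<and> lin_indpt T" "card (set (cols A))" "{}"]
      by (meson List.finite_set card_mono empty_iff empty_subsetI finite_lin_indpt2 rev_finite_subset)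
    then have "card S \<le> card (set (cols A))" by (simp add: card_mono maximal_def)
    moreover have "card (set (cols A)) < length (cols A)"
      using nd card_distinct card_length le_neq_implies_less by blast
    ultimately have "card S < n" using A by auto
    then show False using rank rank_card_indpt[OF A S] by simp
  qed
  then have "lin_indpt (set (cols A))" by (rule full_rank_lin_indpt[OF A rank])
  then show ?thesis using lin_depI[OF A] \<open>distinct (cols A)\<close> by blast
qed

definition pos_def_mat :: "nat \<Rightarrow> real mat \<Rightarrow> bool" where
  "pos_def_mat d G \<longleftrightarrow> (\<forall>x \<in> carrier_vec d. x \<noteq> 0\<^sub>v d \<longrightarrow> 0 < x \<bullet> (G *\<^sub>v x))"

lemma pos_def_mat_inj:
  "pos_def_mat d G \<Longrightarrow> x \<in> carrier_vec d \<Longrightarrow> G *\<^sub>v x = 0\<^sub>v d \<Longrightarrow> x = 0\<^sub>v d"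
  unfolding pos_def_mat_def by (metis less_irrefl scalar_prod_right_zero)

lemma pos_def_mat_det_nonzero:
  "G \<in> carrier_mat d d \<Longrightarrow> pos_def_mat d G \<Longrightarrow> det G \<noteq> 0"
  using det_0_iff_vec_prod_zero pos_def_mat_inj by blast

lemma pos_def_mat_minv:
  assumes G: "G \<in> carrier_mat d d" and pd: "pos_def_mat d G"
  shows "pos_def_mat d (minv G)"
  unfolding pos_def_mat_def
proof (intro ballI impI)
  fix x :: "real vec" assume x: "x \<in> carrier_vec d" "x \<noteq> 0\<^sub>v d"
  note inv = minv_inverse[OF G pos_def_mat_det_nonzero[OF G pd]]
  let ?z = "minv G *\<^sub>v x"
  have z: "?z \<in> carrier_vec d" using inv(1) x by auto
  have Gz: "G *\<^sub>v ?z = x" by (rule mult_mat_vec_right_inverse[OF G inv(1,2) x(1)])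
  then have "?z \<noteq> 0\<^sub>v d" using x(2) G mult_mat_vec_zero by metis
  then have "0 < ?z \<bullet> (G *\<^sub>v ?z)" using pd z unfolding pos_def_mat_def by blast
  then show "0 < x \<bullet> (minv G *\<^sub>v x)" using Gz comm_scalar_prod[OF z x(1)] by simp
qed

lemma pos_def_mat_schur:
  assumes M: "M \<in> carrier_mat m m" and M_pd: "pos_def_mat m M"
    and A: "A \<in> carrier_mat m n" and A_inj: "\<forall>x \<in> carrier_vec n. A *\<^sub>v x = 0\<^sub>v m \<longrightarrow> x = 0\<^sub>v n"
    and C: "C \<in> carrier_mat n n" and C_psd: "\<forall>x \<in> carrier_vec n. 0 \<le> x \<bullet> (C *\<^sub>v x)"
  shows "pos_def_mat n (schur M A C)"
  unfolding pos_def_mat_def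
proof (intro ballI impI)
  fix x :: "real vec" assume x: "x \<in> carrier_vec n" "x \<noteq> 0\<^sub>v n"
  have Mi: "minv M \<in> carrier_mat m m"
    using minv_inverse(1)[OF M pos_def_mat_det_nonzero[OF M M_pd]] .
  have Ax: "A *\<^sub>v x \<in> carrier_vec m" "A *\<^sub>v x \<noteq> 0\<^sub>v m" using A A_inj x by auto
  have "schur M A C *\<^sub>v x = transpose_mat A *\<^sub>v (minv M *\<^sub>v (A *\<^sub>v x)) + C *\<^sub>v x"
    unfolding schur_def using A Mi C x
    by (simp add: add_mult_distrib_mat_vec[of _ n n] assoc_mult_mat_vec[of _ n m _ n])
  then have "x \<bullet> (schur M A C *\<^sub>v x) = (A *\<^sub>v x) \<bullet> (minv M *\<^sub>v (A *\<^sub>v x)) + x \<bullet> (C *\<^sub>v x)"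
    using A Mi C x
    by (simp add: scalar_prod_add_distrib[of _ n] scalar_prod_transpose_mult_mat_vec[OF A x(1)])
  moreover have "0 < (A *\<^sub>v x) \<bullet> (minv M *\<^sub>v (A *\<^sub>v x))"
    using pos_def_mat_minv[OF M M_pd] Ax unfolding pos_def_mat_def by blast
  ultimately show "0 < x \<bullet> (schur M A C *\<^sub>v x)" using C_psd x(1) by fastforce
qed

lemma pos_def_mat_congruence:
  assumes Q: "Q \<in> carrier_mat n k" and Q_inj: "\<forall>y \<in> carrier_vec k. Q *\<^sub>v y = 0\<^sub>v n \<longrightarrow> y = 0\<^sub>v k"
    and S: "S \<in> carrier_mat n n" and S_pd: "pos_def_mat n S"
  shows "pos_def_mat k (transpose_mat Q * (S * Q))"
  unfolding pos_def_mat_def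
proof (intro ballI impI)
  fix y :: "real vec" assume y: "y \<in> carrier_vec k" "y \<noteq> 0\<^sub>v k"
  have "(transpose_mat Q * (S * Q)) *\<^sub>v y = transpose_mat Q *\<^sub>v (S *\<^sub>v (Q *\<^sub>v y))"
    using Q S y by (simp add: assoc_mult_mat_vec[of _ k n _ k])
  then have "y \<bullet> ((transpose_mat Q * (S * Q)) *\<^sub>v y) = (Q *\<^sub>v y) \<bullet> (S *\<^sub>v (Q *\<^sub>v y))"
    using Q S y by (simp add: scalar_prod_transpose_mult_mat_vec[OF Q y(1)])
  moreover have "Q *\<^sub>v y \<in> carrier_vec n" "Q *\<^sub>v y \<noteq> 0\<^sub>v n" using Q Q_inj y by auto
  ultimately show "0 < y \<bullet> ((transpose_mat Q * (S * Q)) *\<^sub>v y)"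
    using S_pd unfolding pos_def_mat_def by simp
qed

lemma galerkin_residual_scalar_prod:
  fixes Q S :: "real mat"
  assumes Q: "Q \<in> carrier_mat n k" and S: "S \<in> carrier_mat n n" and c: "c \<in> carrier_vec n"
    and y: "y \<in> carrier_vec k" and z: "z \<in> carrier_vec k"
  shows "(c - S *\<^sub>v (Q *\<^sub>v z)) \<bullet> (Q *\<^sub>v y)
    = y \<bullet> (transpose_mat Q *\<^sub>v c - (transpose_mat Q * (S * Q)) *\<^sub>v z)"
proof -
  have QT: "transpose_mat Q \<in> carrier_mat k n" and SQ: "S * Q \<in> carrier_mat n k" using Q S by auto
  have "(c - S *\<^sub>v (Q *\<^sub>v z)) \<bullet> (Q *\<^sub>v y) = (Q *\<^sub>v y) \<bullet> (c - S *\<^sub>v (Q *\<^sub>v z))"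
    by (rule comm_scalar_prod[of _ n]) (use Q S c y z in auto)
  also have "\<dots> = y \<bullet> (transpose_mat Q *\<^sub>v (c - S *\<^sub>v (Q *\<^sub>v z)))"
    by (rule scalar_prod_transpose_mult_mat_vec[OF Q y, THEN sym]) (use Q S c z in auto)
  also have "transpose_mat Q *\<^sub>v (c - S *\<^sub>v (Q *\<^sub>v z))
      = transpose_mat Q *\<^sub>v c - transpose_mat Q *\<^sub>v (S *\<^sub>v (Q *\<^sub>v z))"
    using Q S c z by (simp add: mult_minus_distrib_mat_vec[of _ k n])
  also have "transpose_mat Q *\<^sub>v (S *\<^sub>v (Q *\<^sub>v z)) = (transpose_mat Q * (S * Q)) *\<^sub>v z"
    using assoc_mult_mat_vec[OF QT SQ z] assoc_mult_mat_vec[OF S Q z] by simp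
  finally show ?thesis .
qed

lemma galerkin_condition_iff:
  fixes Q S :: "real mat"
  assumes Q: "Q \<in> carrier_mat n k" and S: "S \<in> carrier_mat n n" and c: "c \<in> carrier_vec n"
    and z: "z \<in> carrier_vec k"
  shows "(\<forall>x \<in> {Q *\<^sub>v y | y. y \<in> carrier_vec k}. (c - S *\<^sub>v (Q *\<^sub>v z)) \<bullet> x = 0)
    \<longleftrightarrow> (transpose_mat Q * (S * Q)) *\<^sub>v z = transpose_mat Q *\<^sub>v c"
    (is "?orth \<longleftrightarrow> ?G *\<^sub>v z = ?rhs")
proof -
  have QT: "transpose_mat Q \<in> carrier_mat k n" using Q by auto
  have d: "?rhs - ?G *\<^sub>v z \<in> carrier_vec k" unfolding carrier_dim_vec using Q S by simp
  note residual = galerkin_residual_scalar_prod[OF Q S c _ z]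
  show ?thesis
  proof
    assume ?orth
    show "?G *\<^sub>v z = ?rhs"
    proof (rule eq_vecI)
      fix i assume "i < dim_vec ?rhs"
      then have i: "i < k" using Q by simp
      have "Q *\<^sub>v unit_vec k i \<in> {Q *\<^sub>v y | y. y \<in> carrier_vec k}" by auto
      then have "(c - S *\<^sub>v (Q *\<^sub>v z)) \<bullet> (Q *\<^sub>v unit_vec k i) = 0" using \<open>?orth\<close> by blast
      then have "unit_vec k i \<bullet> (?rhs - ?G *\<^sub>v z) = 0"
        by (simp only: residual[OF unit_vec_carrier, symmetric])
      then have "(?rhs - ?G *\<^sub>v z) $ i = 0" using i d by simp
      then show "(?G *\<^sub>v z) $ i = ?rhs $ i" using i QT by simp
    qed (use Q S in simp)
  next
    assume "?G *\<^sub>v z = ?rhs"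
    then have "?rhs - ?G *\<^sub>v z = 0\<^sub>v k" by (intro eq_vecI) (use QT in simp_all)
    then show ?orth using residual by fastforce
  qed
qed

lemma galerkin_solution_unique:
  fixes Q S :: "real mat"
  assumes Q: "Q \<in> carrier_mat n k" and S: "S \<in> carrier_mat n n" and c: "c \<in> carrier_vec n"
    and G_inj: "\<forall>z \<in> carrier_vec k. (transpose_mat Q * (S * Q)) *\<^sub>v z = 0\<^sub>v k \<longrightarrow> z = 0\<^sub>v k"
    and y: "y \<in> carrier_vec k" and Gy: "(transpose_mat Q * (S * Q)) *\<^sub>v y = transpose_mat Q *\<^sub>v c"
    and p: "p \<in> {Q *\<^sub>v z | z. z \<in> carrier_vec k}"
    and orth: "\<forall>x \<in> {Q *\<^sub>v z | z. z \<in> carrier_vec k}. (c - S *\<^sub>v p) \<bullet> x = 0"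
  shows "p = Q *\<^sub>v y"
proof -
  let ?G = "transpose_mat Q * (S * Q)"
  obtain z where z: "z \<in> carrier_vec k" and p_eq: "p = Q *\<^sub>v z" using p by blast
  have G: "?G \<in> carrier_mat k k" using Q S by (simp add: mult_carrier_mat[of _ k n])
  have "?G *\<^sub>v z = ?G *\<^sub>v y"
    using galerkin_condition_iff[OF Q S c z] orth Gy unfolding p_eq by simp
  then have "?G *\<^sub>v (z - y) = 0\<^sub>v k"
    unfolding mult_minus_distrib_mat_vec[OF G z y] by (intro eq_vecI) (use G in auto)
  then have "z - y = 0\<^sub>v k" using G_inj y z by simp
  have "z = y"
  proof (rule eq_vecI)
    fix i assume i: "i < dim_vec y"
    then have "(z - y) $ i = 0" using \<open>z - y = 0\<^sub>v k\<close> y by simp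
    then show "z $ i = y $ i" using i y z by simp
  qed (use y z in simp)
  then show ?thesis unfolding p_eq by simp
qed

lemma mult_upper_bidiagonal_index:
  fixes X :: "'a :: comm_semiring_1 mat"
  assumes X: "X \<in> carrier_mat nr k" and i: "i < nr" and l: "l < k"
  shows "(X * mat k k (\<lambda>(i, j). if i = j then a i else if j = i + 1 then c i else 0)) $$ (i, l)
    = X $$ (i, l) * a l + (if l = 0 then 0 else X $$ (i, l - 1) * c (l - 1))"
proof -
  let ?B = "mat k k (\<lambda>(i, j). if i = j then a i else if j = i + 1 then c i else 0)"
  have "(X * ?B) $$ (i, l) = (\<Sum>j<k. X $$ (i, j) * ?B $$ (j, l))"
    using X i l by (simp add: scalar_prod_def atLeast0LessThan)
  also have "\<dots> = (\<Sum>j<k. (if j = l then X $$ (i, j) * a l else 0)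
      + (if Suc j = l then X $$ (i, j) * c j else 0))"
    using l by (intro sum.cong) auto
  also have "\<dots> = (\<Sum>j<k. (if j = l then X $$ (i, j) * a l else 0))
      + (\<Sum>j<k. (if Suc j = l then X $$ (i, j) * c j else 0))"
    by (rule sum.distrib)
  also have "\<dots> = X $$ (i, l) * a l + (if l = 0 then 0 else X $$ (i, l - 1) * c (l - 1))"
    using l by (cases l) (simp_all add: sum.delta')
  finally show ?thesis .
qed

context vec_space
begin

lemma span_closed:
  assumes U: "U \<subseteq> carrier_vec n" and x: "x \<in> span U"
  shows "c \<cdot>\<^sub>v x \<in> span U" "y \<in> span U \<Longrightarrow> x + y \<in> span U" "y \<in> span U \<Longrightarrow> x - y \<in> span U"
proof -
  show "c \<cdot>\<^sub>v x \<in> span U" by (rule smult_in_span[OF U x])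
  assume y: "y \<in> span U"
  show "x + y \<in> span U" using span_add1[OF U x y] by simp
  have "x \<in> carrier_vec n" "y \<in> carrier_vec n" using span_is_subset2[OF U] x y by auto
  then have "x + (-1) \<cdot>\<^sub>v y = x - y" by (intro eq_vecI) auto
  moreover have "x + (-1) \<cdot>\<^sub>v y \<in> span U" using span_add1[OF U x smult_in_span[OF U y]] by simp
  ultimately show "x - y \<in> span U" by simp
qed

lemma mult_mat_vec_in_span:
  assumes P: "P \<in> carrier_mat n n" and X: "X \<subseteq> carrier_vec n" and Y: "Y \<subseteq> carrier_vec n"
    and gen: "\<forall>x \<in> X. P *\<^sub>v x \<in> span Y" and x: "x \<in> span X"
  shows "P *\<^sub>v x \<in> span Y"
proof -
  let ?W = "{x \<in> carrier_vec n. P *\<^sub>v x \<in> span Y}"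
  have "LinearCombinations.submodule class_ring ?W V"
    unfolding submodule_def
  proof (intro conjI allI impI)
    show "module class_ring V" by (rule module_axioms)
    show "?W \<subseteq> carrier V" by auto
    show "\<zero>\<^bsub>V\<^esub> \<in> ?W"
      using span_is_submodule[OF Y] P unfolding submodule_def by (auto simp: mult_mat_vec_zero)
    fix v w assume "v \<in> ?W" "w \<in> ?W"
    then show "v \<oplus>\<^bsub>V\<^esub> w \<in> ?W" using P span_add1[OF Y] by (auto simp: mult_add_distrib_mat_vec[OF P])
  next
    fix c :: 'a and v assume "v \<in> ?W"
    then show "c \<odot>\<^bsub>V\<^esub> v \<in> ?W" using P smult_in_span[OF Y] by (auto simp: mult_mat_vec[OF P])
  qed
  then have "span X \<subseteq> ?W" by (rule span_is_subset[rotated]) (use X gen in auto)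
  then show ?thesis using x by auto
qed

end

section \<open>The nsCRAIG recurrence\<close>

locale nscraig =
  fixes M A C N :: "real mat" and b :: "real vec" and m n k :: nat
  assumes M: "M \<in> carrier_mat m m" and M_pd: "pos_def_mat m M"
    and A: "A \<in> carrier_mat m n"
    and A_inj: "\<forall>x \<in> carrier_vec n. A *\<^sub>v x = 0\<^sub>v m \<longrightarrow> x = 0\<^sub>v n"
    and C: "C \<in> carrier_mat n n" and C_psd: "\<forall>x \<in> carrier_vec n. 0 \<le> x \<bullet> (C *\<^sub>v x)"
    and b: "b \<in> carrier_vec n" and b_nz: "b \<noteq> 0\<^sub>v n"
    and N: "N \<in> carrier_mat n n" and N_sym: "transpose_mat N = N" and N_pd: "pos_def_mat n N"
    and k: "1 \<le> k"
    and beta_nonzero: "\<forall>j \<in> {2..k}. craig_beta M A C N b j \<noteq> 0"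
begin

text \<open>Indices are shifted by one against the paper: q i, \<alpha> i, r i, ... are its q_(i+1),
  \<alpha>_(i+1), r_(i+1), ..., and Q j = [q_1, ..., q_j].\<close>

definition "q i = fst (craig_state M A C N b (Suc i)) ! i"
definition "\<alpha> i = craig_alpha M A C N b (Suc i)"
definition "\<beta> i = craig_beta M A C N b (Suc i)"
definition "h i = craig_h A N (craig_state M A C N b (Suc i))"
definition "ghat i = craig_ghat A N (craig_state M A C N b (Suc i))"
definition "v i = (case craig_state M A C N b (Suc i) of (_, _, _, _, vi, _, _) \<Rightarrow> vi)"
definition "t i = (case craig_state M A C N b (Suc i) of (_, _, _, _, _, ti, _) \<Rightarrow> ti)"
definition "r i = (case craig_state M A C N b (Suc i) of (_, _, _, _, _, _, ri) \<Rightarrow> ri)"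
definition "Q j = mat_of_cols n (map q [0..<j])"
definition "g i = ghat i - Q (Suc i) *\<^sub>v h i"

lemma craig_state_Suc_Suc:
  "craig_state M A C N b (Suc (Suc l)) = craig_step M A C N (craig_state M A C N b (Suc l))"
  unfolding craig_state_def by simp

lemma craig_state_eq:
  "craig_state M A C N b (Suc l) = (map q [0..<Suc l], map \<alpha> [0..<Suc l], map \<beta> [0..<Suc l],
     map h [0..<l], v l, t l, r l)"
proof (induction l)
  case 0
  obtain q' a' b' v' t' r' where "craig_state M A C N b (Suc 0) = ([q'], [a'], [b'], [], v', t', r')"
    unfolding craig_state_def craig_init_def by (simp add: Let_def)
  then show ?case unfolding q_def \<alpha>_def \<beta>_def craig_alpha_def craig_beta_def v_def t_def r_def by simp
next
  case (Suc l)
  obtain q' a' b' v' t' r' where X: "craig_state M A C N b (Suc (Suc l)) =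
      (map q [0..<Suc l] @ [q'], map \<alpha> [0..<Suc l] @ [a'], map \<beta> [0..<Suc l] @ [b'],
       map h [0..<l] @ [h l], v', t', r')"
    unfolding craig_state_Suc_Suc using Suc.IH unfolding craig_step_def h_def by (simp add: Let_def)
  have "q (Suc l) = q'" unfolding q_def using X by (simp add: nth_append)
  moreover have "\<alpha> (Suc l) = a'" unfolding \<alpha>_def craig_alpha_def using X by simp
  moreover have "\<beta> (Suc l) = b'" unfolding \<beta>_def craig_beta_def using X by simp
  ultimately show ?case using X unfolding v_def t_def r_def by simp
qed

lemma ghat_eq: "ghat l = minv N *\<^sub>v (transpose_mat A *\<^sub>v v l + t l)"
  unfolding ghat_def craig_state_eq craig_ghat_def by simp

lemma h_eq: "h l = transpose_mat (Q (Suc l)) *\<^sub>v (N *\<^sub>v ghat l)"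
  unfolding h_def craig_h_def Q_def craig_Q_def ghat_def[symmetric] using N by (simp add: craig_state_eq)

lemma init_eqs:
  defines "w0 \<equiv> minv M *\<^sub>v (A *\<^sub>v q 0)"
  shows "\<beta> 0 = gnorm (minv N) b"
    and "q 0 = (1 / \<beta> 0) \<cdot>\<^sub>v (minv N *\<^sub>v b)"
    and "r 0 = q 0"
    and "\<alpha> 0 = sqrt (w0 \<bullet> (M *\<^sub>v w0) + r 0 \<bullet> (C *\<^sub>v r 0))"
    and "v 0 = (1 / \<alpha> 0) \<cdot>\<^sub>v w0"
    and "t 0 = (1 / \<alpha> 0) \<cdot>\<^sub>v (C *\<^sub>v r 0)"
proof -
  have "craig_state M A C N b (Suc 0) = craig_init M A C N b" unfolding craig_state_def by simp
  note X = this[unfolded craig_state_eq craig_init_def Let_def]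
  from X show 1: "\<beta> 0 = gnorm (minv N) b" by simp
  from X show 2: "q 0 = (1 / \<beta> 0) \<cdot>\<^sub>v (minv N *\<^sub>v b)" by (simp add: 1)
  from X show 3: "r 0 = q 0" by (simp add: 1 2)
  from X show 4: "\<alpha> 0 = sqrt (w0 \<bullet> (M *\<^sub>v w0) + r 0 \<bullet> (C *\<^sub>v r 0))"
    unfolding w0_def by (simp add: 1 2 3)
  from X show "v 0 = (1 / \<alpha> 0) \<cdot>\<^sub>v w0" unfolding w0_def by (simp add: 1 2 3 4[unfolded w0_def])
  from X show "t 0 = (1 / \<alpha> 0) \<cdot>\<^sub>v (C *\<^sub>v r 0)" by (simp add: 1 2 3 4[unfolded w0_def])
qed

lemma step_eqs:
  fixes l :: nat
  defines "w' \<equiv> minv M *\<^sub>v (A *\<^sub>v q (Suc l)) - \<beta> (Suc l) \<cdot>\<^sub>v v l"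
  shows "\<beta> (Suc l) = gnorm N (g l)"
    and "q (Suc l) = (1 / \<beta> (Suc l)) \<cdot>\<^sub>v g l"
    and "r (Suc l) = q (Suc l) - (\<beta> (Suc l) / \<alpha> l) \<cdot>\<^sub>v r l"
    and "\<alpha> (Suc l) = sqrt (w' \<bullet> (M *\<^sub>v w') + r (Suc l) \<bullet> (C *\<^sub>v r (Suc l)))"
    and "v (Suc l) = (1 / \<alpha> (Suc l)) \<cdot>\<^sub>v w'"
    and "t (Suc l) = (1 / \<alpha> (Suc l)) \<cdot>\<^sub>v (C *\<^sub>v r (Suc l))"
proof -
  let ?st = "(map q [0..<Suc l], map \<alpha> [0..<Suc l], map \<beta> [0..<Suc l], map h [0..<l], v l, t l, r l)"
  have ghat: "craig_ghat A N ?st = ghat l" using ghat_def[of l] craig_state_eq[of l] by simp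
  have h: "craig_h A N ?st = h l" using h_def[of l] craig_state_eq[of l] by simp
  have Q: "craig_Q (dim_row N) ?st = Q (Suc l)" unfolding craig_Q_def Q_def using N by simp
  note X = craig_state_Suc_Suc[of l, unfolded craig_state_eq craig_step_def Let_def ghat h Q prod.case,
      folded g_def]
  from X show 1: "\<beta> (Suc l) = gnorm N (g l)" by simp
  from X show 2: "q (Suc l) = (1 / \<beta> (Suc l)) \<cdot>\<^sub>v g l" by (simp add: 1)
  from X show 3: "r (Suc l) = q (Suc l) - (\<beta> (Suc l) / \<alpha> l) \<cdot>\<^sub>v r l" by (simp add: 1 2)
  from X show 4: "\<alpha> (Suc l) = sqrt (w' \<bullet> (M *\<^sub>v w') + r (Suc l) \<bullet> (C *\<^sub>v r (Suc l)))"
    unfolding w'_def by (simp add: 1 2 3)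
  from X show "v (Suc l) = (1 / \<alpha> (Suc l)) \<cdot>\<^sub>v w'"
    unfolding w'_def by (simp add: 1 2 3 4[unfolded w'_def])
  from X show "t (Suc l) = (1 / \<alpha> (Suc l)) \<cdot>\<^sub>v (C *\<^sub>v r (Suc l))"
    by (simp add: 1 2 3 4[unfolded w'_def])
qed

lemma M_inverse: "minv M \<in> carrier_mat m m" "M * minv M = 1\<^sub>m m" "minv M * M = 1\<^sub>m m"
  using minv_inverse[OF M pos_def_mat_det_nonzero[OF M M_pd]] by auto

lemma N_inverse: "minv N \<in> carrier_mat n n" "N * minv N = 1\<^sub>m n" "minv N * N = 1\<^sub>m n"
  using minv_inverse[OF N pos_def_mat_det_nonzero[OF N N_pd]] by auto

lemma mult_vec_carrier[simp]:
  "M *\<^sub>v x \<in> carrier_vec m" "minv M *\<^sub>v x \<in> carrier_vec m" "A *\<^sub>v y \<in> carrier_vec m"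
  "transpose_mat A *\<^sub>v x \<in> carrier_vec n" "C *\<^sub>v y \<in> carrier_vec n"
  "N *\<^sub>v y \<in> carrier_vec n" "minv N *\<^sub>v y \<in> carrier_vec n"
  using M M_inverse(1) A C N N_inverse(1) by (simp_all add: carrier_dim_vec)

lemma N_minv_cancel: "x \<in> carrier_vec n \<Longrightarrow> N *\<^sub>v (minv N *\<^sub>v x) = x"
  by (rule mult_mat_vec_right_inverse[OF N N_inverse(1,2)])

lemma minv_N_cancel: "x \<in> carrier_vec n \<Longrightarrow> minv N *\<^sub>v (N *\<^sub>v x) = x"
  by (rule mult_mat_vec_right_inverse[OF N_inverse(1) N N_inverse(3)])

lemma N_symmetric:
  assumes x: "x \<in> carrier_vec n" and y: "y \<in> carrier_vec n"
  shows "x \<bullet> (N *\<^sub>v y) = y \<bullet> (N *\<^sub>v x)"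
proof -
  have "x \<bullet> (N *\<^sub>v y) = (N *\<^sub>v x) \<bullet> y"
    using scalar_prod_transpose_mult_mat_vec[OF N x y] unfolding N_sym .
  also have "\<dots> = y \<bullet> (N *\<^sub>v x)" by (rule comm_scalar_prod[of _ n]) (use N x y in auto)
  finally show ?thesis .
qed

lemma dim_Q[simp]: "dim_row (Q j) = n" "dim_col (Q j) = j"
  unfolding Q_def by simp_all

lemma Q_carrier[simp]: "Q j \<in> carrier_mat n j"
  by (simp add: carrier_matI)

lemma Q_mult_vec_carrier[simp]: "Q j *\<^sub>v y \<in> carrier_vec n"
  by (simp add: carrier_dim_vec)

lemma ghat_carrier[simp]: "ghat l \<in> carrier_vec n"
  unfolding ghat_eq by simp

lemma h_carrier[simp]: "h l \<in> carrier_vec (Suc l)"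
  unfolding h_eq carrier_dim_vec by simp

lemma g_carrier[simp]: "g l \<in> carrier_vec n"
  unfolding g_def carrier_dim_vec by simp

lemma q_carrier[simp]: "q i \<in> carrier_vec n"
  by (cases i) (simp_all add: init_eqs(2) step_eqs(2))

lemma r_carrier[simp]: "r i \<in> carrier_vec n"
  by (induction i) (simp_all add: init_eqs(3) step_eqs(3))

lemma t_carrier[simp]: "t i \<in> carrier_vec n"
  by (cases i) (simp_all add: init_eqs(6) step_eqs(6))

lemma col_Q: "c < j \<Longrightarrow> col (Q j) c = q c"
  unfolding Q_def by simp

lemma Q_transpose_index: "i < j \<Longrightarrow> x \<in> carrier_vec n \<Longrightarrow> (transpose_mat (Q j) *\<^sub>v x) $ i = q i \<bullet> x"
  by (simp add: col_Q)

lemma h_index: "i \<le> l \<Longrightarrow> h l $ i = q i \<bullet> (N *\<^sub>v ghat l)"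
  unfolding h_eq using Q_transpose_index[of i "Suc l"] N by simp

section \<open>N-orthonormality of the q_i\<close>

lemma beta_0_pos: "0 < \<beta> 0" and beta_0_sq: "\<beta> 0 * \<beta> 0 = b \<bullet> (minv N *\<^sub>v b)"
proof -
  have "0 < b \<bullet> (minv N *\<^sub>v b)"
    using pos_def_mat_minv[OF N N_pd] b b_nz unfolding pos_def_mat_def by blast
  then show "0 < \<beta> 0" "\<beta> 0 * \<beta> 0 = b \<bullet> (minv N *\<^sub>v b)"
    unfolding init_eqs(1) gnorm_def by simp_all
qed

lemma beta_Suc_nonzero: "Suc l < k \<Longrightarrow> \<beta> (Suc l) \<noteq> 0"
  using beta_nonzero unfolding \<beta>_def by auto

lemma beta_Suc_sq: "\<beta> (Suc l) * \<beta> (Suc l) = g l \<bullet> (N *\<^sub>v g l)"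
proof -
  have "0 \<le> g l \<bullet> (N *\<^sub>v g l)"
    using N_pd g_carrier[of l] unfolding pos_def_mat_def
    by (cases "g l = 0\<^sub>v n") (auto simp: mult_mat_vec_zero[OF N] intro: less_imp_le)
  then show ?thesis unfolding step_eqs(1) gnorm_def by simp
qed

lemma q_N_norm: "l < k \<Longrightarrow> q l \<bullet> (N *\<^sub>v q l) = 1"
proof (cases l)
  case 0
  have "q 0 \<bullet> (N *\<^sub>v q 0) = (1 / \<beta> 0) * (1 / \<beta> 0) * ((minv N *\<^sub>v b) \<bullet> b)"
    unfolding init_eqs(2) using N N_inverse(1) b
    by (simp add: mult_mat_vec smult_scalar_prod_distrib scalar_prod_smult_distrib N_minv_cancel)
  also have "(minv N *\<^sub>v b) \<bullet> b = \<beta> 0 * \<beta> 0"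
    unfolding beta_0_sq using N_inverse(1) b by (simp add: comm_scalar_prod[of _ n])
  finally show ?thesis using 0 beta_0_pos by simp
next
  case (Suc l')
  assume "l < k"
  then have "\<beta> l \<noteq> 0" using beta_Suc_nonzero Suc by simp
  moreover have "q l \<bullet> (N *\<^sub>v q l) = (1 / \<beta> l) * (1 / \<beta> l) * (g l' \<bullet> (N *\<^sub>v g l'))"
    unfolding Suc step_eqs(2) using N by (simp add: mult_mat_vec smult_scalar_prod_distrib scalar_prod_smult_distrib)
  ultimately show ?thesis unfolding Suc beta_Suc_sq[symmetric] by simp
qed

lemma Q_scalar_prod_N_q:
  assumes orth: "\<forall>c < j. q c \<bullet> (N *\<^sub>v q i) = (if c = i then 1 else 0)" and y: "y \<in> carrier_vec j"
  shows "(Q j *\<^sub>v y) \<bullet> (N *\<^sub>v q i) = (if i < j then y $ i else 0)"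
proof -
  have "(Q j *\<^sub>v y) \<bullet> (N *\<^sub>v q i) = (N *\<^sub>v q i) \<bullet> (Q j *\<^sub>v y)"
    by (rule comm_scalar_prod[of _ n]) (use N y in auto)
  also have "\<dots> = (\<Sum>c<j. (q c \<bullet> (N *\<^sub>v q i)) * y $ c)"
    using scalar_prod_mult_mat_vec_cols[OF _ Q_carrier y] N by (simp add: col_Q)
  also have "\<dots> = (\<Sum>c<j. (if c = i then 1 else 0) * y $ c)" using orth by (intro sum.cong) auto
  also have "\<dots> = (if i < j then y $ i else 0)"
    by (simp add: if_distrib[of "\<lambda>x. x * _"] cong: if_cong)
  finally show ?thesis .
qed

lemma q_Suc_N_orthogonal:
  assumes orth: "\<forall>i < Suc l. \<forall>i' < Suc l. q i \<bullet> (N *\<^sub>v q i') = (if i = i' then 1 else 0)"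
    and i: "i < Suc l"
  shows "q (Suc l) \<bullet> (N *\<^sub>v q i) = 0"
proof -
  \<comment> \<open>g_l is ghat_l minus its N-orthogonal projection onto q_0, ..., q_l (Gram-Schmidt).\<close>
  have "(Q (Suc l) *\<^sub>v h l) \<bullet> (N *\<^sub>v q i) = h l $ i"
    using Q_scalar_prod_N_q[of "Suc l" i] orth i by simp
  also have "\<dots> = ghat l \<bullet> (N *\<^sub>v q i)" using h_index[of i l] i N_symmetric by simp
  finally have "g l \<bullet> (N *\<^sub>v q i) = 0"
    unfolding g_def by (simp add: minus_scalar_prod_distrib[of _ n])
  then show ?thesis unfolding step_eqs(2) by (simp add: smult_scalar_prod_distrib[of _ n])
qed

lemma q_orthonormal_upto:
  "j \<le> k \<Longrightarrow> \<forall>i < j. \<forall>i' < j. q i \<bullet> (N *\<^sub>v q i') = (if i = i' then 1 else 0)"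
proof (induction j)
  case 0
  show ?case by simp
next
  case (Suc j)
  then have IH: "\<forall>i < j. \<forall>i' < j. q i \<bullet> (N *\<^sub>v q i') = (if i = i' then 1 else 0)" by simp
  have new: "q j \<bullet> (N *\<^sub>v q i) = 0" if "i < j" for i
    using q_Suc_N_orthogonal[of "j - 1" i] IH that by (cases j) simp_all
  show ?case
  proof (intro allI impI)
    fix i i' assume "i < Suc j" "i' < Suc j"
    then consider "i < j" "i' < j" | "i = j" "i' < j" | "i < j" "i' = j" | "i = j" "i' = j"
      by linarith
    then show "q i \<bullet> (N *\<^sub>v q i') = (if i = i' then 1 else 0)"
    proof cases
      case 1
      then show ?thesis using IH by simp
    next
      case 2
      then show ?thesis using new[of i'] by simp
    next
      case 3
      then show ?thesis using new[of i] N_symmetric[of "q i" "q j"] by simp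
    next
      case 4
      then show ?thesis using q_N_norm[of j] \<open>Suc j \<le> k\<close> by simp
    qed
  qed
qed

lemma q_orthonormal: "i < k \<Longrightarrow> i' < k \<Longrightarrow> q i \<bullet> (N *\<^sub>v q i') = (if i = i' then 1 else 0)"
  using q_orthonormal_upto[of k] by simp

lemma Q_coordinate:
  "i < k \<Longrightarrow> j \<le> k \<Longrightarrow> y \<in> carrier_vec j \<Longrightarrow> (Q j *\<^sub>v y) \<bullet> (N *\<^sub>v q i) = (if i < j then y $ i else 0)"
  by (rule Q_scalar_prod_N_q) (auto simp: q_orthonormal)

section \<open>The factorisation Q_k^T S Q_k = H_k B_k\<close>

lemma r_scalar_prod_N_q:
  "l < k \<Longrightarrow> l \<le> i \<Longrightarrow> i < k \<Longrightarrow> q i \<bullet> (N *\<^sub>v r l) = (if i = l then 1 else 0)"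
proof (induction l arbitrary: i)
  case 0
  then show ?case using q_orthonormal init_eqs(3) by simp
next
  case (Suc l)
  have "q i \<bullet> (N *\<^sub>v r (Suc l)) = q i \<bullet> (N *\<^sub>v q (Suc l)) - (\<beta> (Suc l) / \<alpha> l) * (q i \<bullet> (N *\<^sub>v r l))"
    unfolding step_eqs(3) using N
    by (simp add: mult_minus_distrib_mat_vec mult_mat_vec scalar_prod_minus_distrib[of _ n])
  also have "q i \<bullet> (N *\<^sub>v r l) = 0" using Suc by simp
  finally show ?case using q_orthonormal Suc.prems by simp
qed

lemma r_nonzero: "l < k \<Longrightarrow> r l \<noteq> 0\<^sub>v n"
  using r_scalar_prod_N_q[of l l] by (auto simp: mult_mat_vec_zero[OF N])

text \<open>The paper's w_l in closed form; alpha_v_t_eqs shows that the recurrence computes it.\<close>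

definition "w l = minv M *\<^sub>v (A *\<^sub>v r l)"

lemma w_M_pos: "l < k \<Longrightarrow> 0 < w l \<bullet> (M *\<^sub>v w l)"
proof -
  assume "l < k"
  then have "A *\<^sub>v r l \<noteq> 0\<^sub>v m" using A_inj r_nonzero by auto
  moreover have "M *\<^sub>v w l = A *\<^sub>v r l" unfolding w_def by (rule mult_mat_vec_right_inverse[OF M M_inverse(1,2)]) simp
  ultimately have "w l \<noteq> 0\<^sub>v m" using mult_mat_vec_zero[OF M] by metis
  then show ?thesis using M_pd unfolding w_def pos_def_mat_def by simp
qed

lemma alpha_v_t_eqs:
  "l < k \<Longrightarrow> \<alpha> l = sqrt (w l \<bullet> (M *\<^sub>v w l) + r l \<bullet> (C *\<^sub>v r l)) \<and> 0 < \<alpha> l \<and>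
     v l = (1 / \<alpha> l) \<cdot>\<^sub>v w l \<and> t l = (1 / \<alpha> l) \<cdot>\<^sub>v (C *\<^sub>v r l)"
proof (induction l)
  case 0
  have "\<alpha> 0 = sqrt (w 0 \<bullet> (M *\<^sub>v w 0) + r 0 \<bullet> (C *\<^sub>v r 0))"
    using init_eqs(4) unfolding w_def init_eqs(3) .
  moreover then have "0 < \<alpha> 0" using w_M_pos[OF 0] C_psd by (simp add: add_pos_nonneg)
  ultimately show ?case using init_eqs(5,6) unfolding w_def init_eqs(3) by simp
next
  case (Suc l)
  then have "0 < \<alpha> l" "v l = (1 / \<alpha> l) \<cdot>\<^sub>v w l" by auto
  have "w (Suc l) = minv M *\<^sub>v (A *\<^sub>v q (Suc l) - (\<beta> (Suc l) / \<alpha> l) \<cdot>\<^sub>v (A *\<^sub>v r l))"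
    unfolding w_def step_eqs(3) using A by (simp add: mult_minus_distrib_mat_vec mult_mat_vec)
  also have "\<dots> = minv M *\<^sub>v (A *\<^sub>v q (Suc l)) - \<beta> (Suc l) \<cdot>\<^sub>v v l"
    unfolding w_def \<open>v l = _\<close> using M_inverse(1) \<open>0 < \<alpha> l\<close>
    by (simp add: mult_minus_distrib_mat_vec mult_mat_vec smult_smult_assoc)
  finally have w: "minv M *\<^sub>v (A *\<^sub>v q (Suc l)) - \<beta> (Suc l) \<cdot>\<^sub>v v l = w (Suc l)" ..
  have "\<alpha> (Suc l) = sqrt (w (Suc l) \<bullet> (M *\<^sub>v w (Suc l)) + r (Suc l) \<bullet> (C *\<^sub>v r (Suc l)))"
    using step_eqs(4)[of l] unfolding w .
  moreover then have "0 < \<alpha> (Suc l)" using w_M_pos[OF Suc.prems] C_psd by (simp add: add_pos_nonneg)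
  ultimately show ?case using step_eqs(5,6)[of l] unfolding w by simp
qed

lemma alpha_pos: "l < k \<Longrightarrow> 0 < \<alpha> l"
  using alpha_v_t_eqs by blast

definition "S = schur M A C"

lemma S_carrier[simp]: "S \<in> carrier_mat n n"
  unfolding S_def schur_def using A M_inverse(1) C by auto

lemma S_mult_vec: "x \<in> carrier_vec n \<Longrightarrow> S *\<^sub>v x = transpose_mat A *\<^sub>v (minv M *\<^sub>v (A *\<^sub>v x)) + C *\<^sub>v x"
  unfolding S_def schur_def using A M_inverse(1) C
  by (simp add: add_mult_distrib_mat_vec[of _ n n] assoc_mult_mat_vec[of _ n m _ n])

lemma S_r: "l < k \<Longrightarrow> S *\<^sub>v r l = \<alpha> l \<cdot>\<^sub>v (N *\<^sub>v ghat l)"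
proof -
  assume l: "l < k"
  have "N *\<^sub>v ghat l = transpose_mat A *\<^sub>v v l + t l"
    unfolding ghat_eq by (rule N_minv_cancel) simp
  also have "\<dots> = (1 / \<alpha> l) \<cdot>\<^sub>v (S *\<^sub>v r l)"
    using alpha_v_t_eqs[OF l] A C unfolding S_mult_vec[OF r_carrier] w_def
    by (simp add: mult_mat_vec smult_add_distrib_vec[of _ n])
  finally show ?thesis using alpha_pos[OF l] by (simp add: smult_smult_assoc)
qed

lemma ghat_arnoldi: "Suc l < k \<Longrightarrow> ghat l = \<beta> (Suc l) \<cdot>\<^sub>v q (Suc l) + Q (Suc l) *\<^sub>v h l"
proof -
  assume "Suc l < k"
  then have "\<beta> (Suc l) \<cdot>\<^sub>v q (Suc l) = g l"
    unfolding step_eqs(2) using beta_Suc_nonzero by (simp add: smult_smult_assoc)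
  then show ?thesis unfolding g_def by (auto intro: eq_vecI)
qed

lemma q_scalar_prod_N_ghat:
  assumes i: "i < k" and l: "l < k"
  shows "q i \<bullet> (N *\<^sub>v ghat l) = (if i \<le> l then h l $ i else if i = Suc l then \<beta> (Suc l) else 0)"
proof (cases "i \<le> l")
  case True
  then show ?thesis using h_index by simp
next
  case False
  then have l1: "Suc l < k" using i by simp
  have "q i \<bullet> (N *\<^sub>v ghat l) = (\<beta> (Suc l) \<cdot>\<^sub>v q (Suc l) + Q (Suc l) *\<^sub>v h l) \<bullet> (N *\<^sub>v q i)"
    using N_symmetric[of "q i" "ghat l"] ghat_arnoldi[OF l1] by simp
  also have "\<dots> = \<beta> (Suc l) * (q (Suc l) \<bullet> (N *\<^sub>v q i)) + (Q (Suc l) *\<^sub>v h l) \<bullet> (N *\<^sub>v q i)"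
    by (simp add: add_scalar_prod_distrib[of _ n] smult_scalar_prod_distrib[of _ n])
  also have "\<dots> = (if i = Suc l then \<beta> (Suc l) else 0)"
    using q_orthonormal[OF l1 i] Q_coordinate[OF i, of "Suc l" "h l"] l1 False by auto
  finally show ?thesis using False by simp
qed

definition "Hk = nscraig_H M A C N b k"
definition "Bk = nscraig_B M A C N b k"

lemma Hk_carrier[simp]: "Hk \<in> carrier_mat k k"
  unfolding Hk_def nscraig_H_def by simp

lemma Bk_carrier[simp]: "Bk \<in> carrier_mat k k"
  unfolding Bk_def nscraig_B_def by simp

lemma Hk_index: "i < k \<Longrightarrow> l < k \<Longrightarrow> Hk $$ (i, l) = q i \<bullet> (N *\<^sub>v ghat l)"
  unfolding Hk_def nscraig_H_def using q_scalar_prod_N_ghat by (simp add: h_def \<beta>_def)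

lemma Bk_eq: "Bk = mat k k (\<lambda>(i, j). if i = j then \<alpha> i else if j = i + 1 then \<beta> (Suc i) else 0)"
proof -
  have \<alpha>: "craig_alpha M A C N b (i + 1) = \<alpha> i" for i
    unfolding \<alpha>_def by simp
  have \<beta>: "craig_beta M A C N b (i + 2) = \<beta> (Suc i)" for i
    unfolding \<beta>_def by (simp add: numeral_2_eq_2)
  show ?thesis unfolding Bk_def nscraig_B_def \<alpha> \<beta> ..
qed

lemma S_q:
  assumes l: "l < k"
  shows "S *\<^sub>v q l = N *\<^sub>v (\<alpha> l \<cdot>\<^sub>v ghat l + (if l = 0 then 0\<^sub>v n else \<beta> l \<cdot>\<^sub>v ghat (l - 1)))"
proof (cases l)
  case 0
  then show ?thesis using S_r[OF l] init_eqs(3) by (simp add: mult_mat_vec[OF N])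
next
  case (Suc l')
  then have l': "l' < k" using l by simp
  have "q l = r l + (\<beta> l / \<alpha> l') \<cdot>\<^sub>v r l'"
    unfolding Suc step_eqs(3)
    by (rule eq_vecI) (simp_all add: carrier_vecD[OF q_carrier] carrier_vecD[OF r_carrier])
  then have "S *\<^sub>v q l = \<alpha> l \<cdot>\<^sub>v (N *\<^sub>v ghat l) + \<beta> l \<cdot>\<^sub>v (N *\<^sub>v ghat l')"
    using S_r[OF l] S_r[OF l'] alpha_pos[OF l']
    by (simp add: mult_add_distrib_mat_vec[OF S_carrier] mult_mat_vec[OF S_carrier] smult_smult_assoc)
  then show ?thesis
    using Suc by (simp add: mult_add_distrib_mat_vec[OF N] mult_mat_vec[OF N])
qed

lemma q_scalar_prod_S_q:
  assumes i: "i < k" and l: "l < k"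
  shows "q i \<bullet> (S *\<^sub>v q l) = Hk $$ (i, l) * \<alpha> l + (if l = 0 then 0 else Hk $$ (i, l - 1) * \<beta> l)"
  using Hk_index[OF i l] Hk_index[OF i, of "l - 1"] l
  by (simp add: S_q[OF l] mult_add_distrib_mat_vec[OF N] mult_mat_vec[OF N]
      scalar_prod_add_distrib[of _ n] scalar_prod_smult_distrib[of _ n] mult_mat_vec_zero[OF N] mult.commute)

lemma Hk_Bk_eq: "Hk * Bk = transpose_mat (Q k) * (S * Q k)"
proof (rule eq_matI)
  fix i l assume "i < dim_row (transpose_mat (Q k) * (S * Q k))" "l < dim_col (transpose_mat (Q k) * (S * Q k))"
  then have i: "i < k" and l: "l < k" by auto
  have "(transpose_mat (Q k) * (S * Q k)) $$ (i, l) = q i \<bullet> (S *\<^sub>v q l)"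
    using i l by (simp add: col_Q col_mult2[OF S_carrier Q_carrier])
  then show "(Hk * Bk) $$ (i, l) = (transpose_mat (Q k) * (S * Q k)) $$ (i, l)"
    unfolding Bk_eq mult_upper_bidiagonal_index[OF Hk_carrier i l] q_scalar_prod_S_q[OF i l] by simp
qed (auto simp: carrier_matD[OF Hk_carrier] carrier_matD[OF Bk_carrier])

lemma Q_inj: "\<forall>y \<in> carrier_vec k. Q k *\<^sub>v y = 0\<^sub>v n \<longrightarrow> y = 0\<^sub>v k"
proof (intro ballI impI)
  fix y assume y: "y \<in> carrier_vec k" and Qy: "Q k *\<^sub>v y = 0\<^sub>v n"
  show "y = 0\<^sub>v k"
  proof (rule eq_vecI)
    fix i assume "i < dim_vec (0\<^sub>v k)"
    then have "i < k" by simp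
    then have "y $ i = (Q k *\<^sub>v y) \<bullet> (N *\<^sub>v q i)" using Q_coordinate[OF _ _ y] by simp
    then show "y $ i = 0\<^sub>v k $ i" using \<open>i < k\<close> unfolding Qy by simp
  qed (use y in simp)
qed

lemma Hk_Bk_pos_def: "pos_def_mat k (Hk * Bk)"
  unfolding Hk_Bk_eq S_def
  by (rule pos_def_mat_congruence[OF Q_carrier Q_inj _ pos_def_mat_schur[OF M M_pd A A_inj C C_psd]])
    (simp add: S_carrier[unfolded S_def])

lemma det_Hk_nonzero: "det Hk \<noteq> 0" and det_Bk_nonzero: "det Bk \<noteq> 0"
  using pos_def_mat_det_nonzero[OF mult_carrier_mat[OF Hk_carrier Bk_carrier] Hk_Bk_pos_def]
  unfolding det_mult[OF Hk_carrier Bk_carrier] by auto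

lemma Q_transpose_b: "transpose_mat (Q k) *\<^sub>v b = \<beta> 0 \<cdot>\<^sub>v unit_vec k 0"
proof (rule eq_vecI)
  fix i assume "i < dim_vec (\<beta> 0 \<cdot>\<^sub>v unit_vec k 0)"
  then have i: "i < k" by simp
  have b_eq: "b = \<beta> 0 \<cdot>\<^sub>v (N *\<^sub>v q 0)"
    unfolding init_eqs(2) using N N_inverse(1) b beta_0_pos
    by (simp add: mult_mat_vec[of _ n n] N_minv_cancel smult_smult_assoc)
  have "(transpose_mat (Q k) *\<^sub>v b) $ i = \<beta> 0 * (q i \<bullet> (N *\<^sub>v q 0))"
    unfolding Q_transpose_index[OF i b] by (subst b_eq) (simp add: scalar_prod_smult_distrib[of _ n])
  then show "(transpose_mat (Q k) *\<^sub>v b) $ i = (\<beta> 0 \<cdot>\<^sub>v unit_vec k 0) $ i"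
    using q_orthonormal[OF i] i k by simp
qed simp

lemma nscraig_y_galerkin:
  "nscraig_y M A C N b k \<in> carrier_vec k \<and>
   (Hk * Bk) *\<^sub>v nscraig_y M A C N b k = transpose_mat (Q k) *\<^sub>v (- b)"
proof -
  let ?e = "\<beta> 0 \<cdot>\<^sub>v unit_vec k 0"
  note H_inv = minv_inverse[OF Hk_carrier det_Hk_nonzero]
  note B_inv = minv_inverse[OF Bk_carrier det_Bk_nonzero]
  have e: "?e \<in> carrier_vec k" by simp
  have z: "minv Hk *\<^sub>v ?e \<in> carrier_vec k" and y: "minv Bk *\<^sub>v (minv Hk *\<^sub>v ?e) \<in> carrier_vec k"
    using H_inv(1) B_inv(1) by auto
  have y_eq: "nscraig_y M A C N b k = - (minv Bk *\<^sub>v (minv Hk *\<^sub>v ?e))"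
    unfolding nscraig_y_def Hk_def Bk_def \<beta>_def by simp
  have "(Hk * Bk) *\<^sub>v nscraig_y M A C N b k = Hk *\<^sub>v (Bk *\<^sub>v - (minv Bk *\<^sub>v (minv Hk *\<^sub>v ?e)))"
    unfolding y_eq by (rule assoc_mult_mat_vec[OF Hk_carrier Bk_carrier]) (use y in simp)
  also have "\<dots> = - ?e"
    unfolding mult_mat_vec_uminus[OF Bk_carrier y] mult_mat_vec_uminus[OF Hk_carrier z]
      mult_mat_vec_right_inverse[OF Bk_carrier B_inv(1,2) z] mult_mat_vec_right_inverse[OF Hk_carrier H_inv(1,2) e] ..
  also have "\<dots> = transpose_mat (Q k) *\<^sub>v (- b)"
    using mult_mat_vec_uminus[OF _ b, of "transpose_mat (Q k)" k] Q_transpose_b by simp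
  finally show ?thesis using y y_eq by simp
qed

lemma nscraig_Q_eq: "nscraig_Q M A C N b k = Q k"
proof -
  have k_Suc: "k = Suc (k - 1)" using k by simp
  then have "craig_state M A C N b k = craig_state M A C N b (Suc (k - 1))" by simp
  then show ?thesis unfolding nscraig_Q_def craig_Q_def Q_def
    using craig_state_eq[of "k - 1"] b k_Suc by (simp del: upt_Suc)
qed

end

section \<open>The Krylov space\<close>

sublocale nscraig \<subseteq> VS: vec_space "TYPE(real)" n .

context nscraig
begin

definition "Ninv_S = minv N * S"
definition "krylov_vec i = (Ninv_S ^\<^sub>m i) *\<^sub>v (minv N *\<^sub>v b)"
definition "span_q j = VS.span (q ` {0..<j})"
definition "span_krylov j = VS.span (krylov_vec ` {0..<j})"

lemma Ninv_S_carrier[simp]: "Ninv_S \<in> carrier_mat n n"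
  unfolding Ninv_S_def using N_inverse(1) by simp

lemma krylov_vec_carrier[simp]: "krylov_vec i \<in> carrier_vec n"
  unfolding krylov_vec_def carrier_dim_vec by (simp add: carrier_matD[OF Ninv_S_carrier])

lemma krylov_vec_Suc: "krylov_vec (Suc i) = Ninv_S *\<^sub>v krylov_vec i"
  unfolding krylov_vec_def pow_mat_Suc_left[OF Ninv_S_carrier]
  by (simp add: assoc_mult_mat_vec[of _ n n _ n])

lemma Ninv_S_mult_vec: "x \<in> carrier_vec n \<Longrightarrow> Ninv_S *\<^sub>v x = minv N *\<^sub>v (S *\<^sub>v x)"
  unfolding Ninv_S_def using N_inverse(1) by (simp add: assoc_mult_mat_vec[of _ n n _ n])

lemma Ninv_S_q: "l < k \<Longrightarrow> Ninv_S *\<^sub>v q l = \<alpha> l \<cdot>\<^sub>v ghat l + (if l = 0 then 0\<^sub>v n else \<beta> l \<cdot>\<^sub>v ghat (l - 1))"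
  unfolding Ninv_S_mult_vec[OF q_carrier] S_q by (rule minv_N_cancel) simp

lemma Ninv_S_r: "l < k \<Longrightarrow> Ninv_S *\<^sub>v r l = \<alpha> l \<cdot>\<^sub>v ghat l"
  unfolding Ninv_S_mult_vec[OF r_carrier] S_r by (simp add: mult_mat_vec[OF N_inverse(1)] minv_N_cancel)

lemma krylov_eq_span_krylov: "krylov N (schur M A C) b j = span_krylov j"
  unfolding krylov_def span_krylov_def krylov_vec_def Ninv_S_def S_def using b by simp

lemma span_q_eq_range: "span_q j = {Q j *\<^sub>v z | z. z \<in> carrier_vec j}"
proof -
  have "cols (Q j) = map q [0..<j]" unfolding Q_def by (rule cols_mat_of_cols) auto
  then have "span_q j = VS.col_space (Q j)" unfolding span_q_def VS.col_space_def by simp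
  then show ?thesis using VS.col_space_eq[OF Q_carrier] by auto
qed

lemma q_in_span_q: "i < j \<Longrightarrow> q i \<in> span_q j"
  unfolding span_q_def by (rule VS.span_mem) auto

lemma krylov_vec_in_span_krylov: "i < j \<Longrightarrow> krylov_vec i \<in> span_krylov j"
  unfolding span_krylov_def by (rule VS.span_mem) auto

lemma Q_mult_vec_in_span_q: "y \<in> carrier_vec j \<Longrightarrow> Q j *\<^sub>v y \<in> span_q j"
  unfolding span_q_eq_range by auto

lemma span_q_mono: "x \<in> span_q j \<Longrightarrow> j \<le> j' \<Longrightarrow> x \<in> span_q j'"
proof -
  assume "x \<in> span_q j" "j \<le> j'"
  moreover have "q ` {0..<j} \<subseteq> q ` {0..<j'}" using \<open>j \<le> j'\<close> by (intro image_mono) auto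
  ultimately show ?thesis unfolding span_q_def using VS.span_is_monotone by blast
qed

lemma span_krylov_mono: "x \<in> span_krylov j \<Longrightarrow> j \<le> j' \<Longrightarrow> x \<in> span_krylov j'"
proof -
  assume "x \<in> span_krylov j" "j \<le> j'"
  moreover have "krylov_vec ` {0..<j} \<subseteq> krylov_vec ` {0..<j'}" using \<open>j \<le> j'\<close> by (intro image_mono) auto
  ultimately show ?thesis unfolding span_krylov_def using VS.span_is_monotone by blast
qed

lemma span_q_closed:
  assumes "x \<in> span_q j"
  shows "c \<cdot>\<^sub>v x \<in> span_q j" "y \<in> span_q j \<Longrightarrow> x + y \<in> span_q j" "y \<in> span_q j \<Longrightarrow> x - y \<in> span_q j"
proof -
  have U: "q ` {0..<j} \<subseteq> carrier_vec n" by auto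
  show "c \<cdot>\<^sub>v x \<in> span_q j" "y \<in> span_q j \<Longrightarrow> x + y \<in> span_q j" "y \<in> span_q j \<Longrightarrow> x - y \<in> span_q j"
    using VS.span_closed[OF U assms[unfolded span_q_def]] unfolding span_q_def by auto
qed

lemma span_krylov_closed:
  assumes "x \<in> span_krylov j"
  shows "c \<cdot>\<^sub>v x \<in> span_krylov j" "y \<in> span_krylov j \<Longrightarrow> x + y \<in> span_krylov j"
    "y \<in> span_krylov j \<Longrightarrow> x - y \<in> span_krylov j"
proof -
  have U: "krylov_vec ` {0..<j} \<subseteq> carrier_vec n" by auto
  show "c \<cdot>\<^sub>v x \<in> span_krylov j" "y \<in> span_krylov j \<Longrightarrow> x + y \<in> span_krylov j"
    "y \<in> span_krylov j \<Longrightarrow> x - y \<in> span_krylov j"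
    using VS.span_closed[OF U assms[unfolded span_krylov_def]] unfolding span_krylov_def by auto
qed

lemma r_in_span_q: "r l \<in> span_q (Suc l)"
proof (induction l)
  case 0
  show ?case using q_in_span_q init_eqs(3) by simp
next
  case (Suc l)
  then have "r l \<in> span_q (Suc (Suc l))" by (rule span_q_mono) simp
  then show ?case unfolding step_eqs(3) by (intro span_q_closed q_in_span_q) auto
qed

lemma ghat_in_span_q:
  assumes l: "Suc l < k"
  shows "ghat l \<in> span_q (Suc (Suc l))"
proof -
  have "Q (Suc l) *\<^sub>v h l \<in> span_q (Suc (Suc l))"
    using span_q_mono[OF Q_mult_vec_in_span_q[OF h_carrier]] by simp
  then show ?thesis unfolding ghat_arnoldi[OF l] by (simp add: span_q_closed q_in_span_q)
qed

lemma Ninv_S_span_q: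
  assumes l: "Suc l < k" and x: "x \<in> span_q (Suc l)"
  shows "Ninv_S *\<^sub>v x \<in> span_q (Suc (Suc l))"
proof -
  have gen: "\<forall>y \<in> q ` {0..<Suc l}. Ninv_S *\<^sub>v y \<in> span_q (Suc (Suc l))"
  proof
    fix y assume "y \<in> q ` {0..<Suc l}"
    then obtain i where "i < Suc l" and y: "y = q i" by auto
    then have i: "i \<le> l" by simp
    have g: "ghat i \<in> span_q (Suc (Suc l))"
      using span_q_mono[OF ghat_in_span_q[of i]] i l by simp
    have eq: "Ninv_S *\<^sub>v q i = \<alpha> i \<cdot>\<^sub>v ghat i + (if i = 0 then 0\<^sub>v n else \<beta> i \<cdot>\<^sub>v ghat (i - 1))"
      using Ninv_S_q i l by simp
    show "Ninv_S *\<^sub>v y \<in> span_q (Suc (Suc l))"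
    proof (cases "i = 0")
      case True
      then show ?thesis unfolding y eq using span_q_closed(1)[OF g] by simp
    next
      case False
      then have "ghat (i - 1) \<in> span_q (Suc (Suc l))"
        using span_q_mono[OF ghat_in_span_q[of "i - 1"]] i l by simp
      then show ?thesis
        unfolding y eq using False span_q_closed(2)[OF span_q_closed(1)[OF g] span_q_closed(1)] by simp
    qed
  qed
  have U: "q ` {0..<Suc l} \<subseteq> carrier_vec n" "q ` {0..<Suc (Suc l)} \<subseteq> carrier_vec n" by auto
  show ?thesis
    using VS.mult_mat_vec_in_span[OF Ninv_S_carrier U gen[unfolded span_q_def] x[unfolded span_q_def]]
    unfolding span_q_def .
qed

lemma Ninv_S_span_krylov:
  assumes x: "x \<in> span_krylov j"
  shows "Ninv_S *\<^sub>v x \<in> span_krylov (Suc j)"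
proof -
  have U: "krylov_vec ` {0..<j} \<subseteq> carrier_vec n" "krylov_vec ` {0..<Suc j} \<subseteq> carrier_vec n" by auto
  have "\<forall>y \<in> krylov_vec ` {0..<j}. Ninv_S *\<^sub>v y \<in> VS.span (krylov_vec ` {0..<Suc j})"
    using krylov_vec_in_span_krylov[unfolded span_krylov_def] by (auto simp: krylov_vec_Suc[symmetric])
  from VS.mult_mat_vec_in_span[OF Ninv_S_carrier U this x[unfolded span_krylov_def]]
  show ?thesis unfolding span_krylov_def .
qed

lemma krylov_vec_in_span_q:
  assumes j: "j < k" and IH: "span_krylov j = span_q j"
  shows "krylov_vec j \<in> span_q (Suc j)"
proof (cases j)
  case 0
  have "krylov_vec 0 = \<beta> 0 \<cdot>\<^sub>v q 0"
    unfolding krylov_vec_def init_eqs(2) using beta_0_pos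
    by (simp add: smult_smult_assoc carrier_matD[OF Ninv_S_carrier])
  then show ?thesis using 0 span_q_closed(1)[OF q_in_span_q[of 0 1]] by simp
next
  case (Suc l)
  then have "krylov_vec l \<in> span_q (Suc l)" using IH krylov_vec_in_span_krylov by blast
  then show ?thesis unfolding Suc krylov_vec_Suc using Ninv_S_span_q j Suc by simp
qed

lemma q_in_span_krylov:
  assumes j: "j < k" and IH: "span_krylov j = span_q j"
  shows "q j \<in> span_krylov (Suc j)"
proof (cases j)
  case 0
  have "q 0 = (1 / \<beta> 0) \<cdot>\<^sub>v krylov_vec 0"
    unfolding krylov_vec_def init_eqs(2) by (simp add: carrier_matD[OF Ninv_S_carrier])
  then show ?thesis using 0 span_krylov_closed(1)[OF krylov_vec_in_span_krylov[of 0 1]] by simp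
next
  case (Suc l)
  have "ghat l = (1 / \<alpha> l) \<cdot>\<^sub>v (Ninv_S *\<^sub>v r l)"
    using Ninv_S_r[of l] alpha_pos[of l] j Suc by (simp add: smult_smult_assoc)
  moreover have "r l \<in> span_krylov (Suc l)" using r_in_span_q IH Suc by simp
  ultimately have "ghat l \<in> span_krylov (Suc j)" using Suc by (simp add: Ninv_S_span_krylov span_krylov_closed)
  moreover have "Q (Suc l) *\<^sub>v h l \<in> span_krylov (Suc j)"
    using Q_mult_vec_in_span_q[OF h_carrier, of l] IH Suc span_krylov_mono[of _ j "Suc j"] by auto
  ultimately show ?thesis unfolding Suc step_eqs(2) g_def by (simp add: span_krylov_closed)
qed

lemma span_krylov_eq_span_q: "j \<le> k \<Longrightarrow> span_krylov j = span_q j"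
proof (induction j)
  case 0
  show ?case unfolding span_krylov_def span_q_def by simp
next
  case (Suc j)
  then have IH: "span_krylov j = span_q j" and j: "j < k" by simp_all
  have "krylov_vec i \<in> span_q (Suc j)" if "i < Suc j" for i
  proof (cases "i = j")
    case False
    then have "krylov_vec i \<in> span_krylov j" using that by (simp add: krylov_vec_in_span_krylov)
    then show ?thesis unfolding IH by (rule span_q_mono) simp
  qed (use krylov_vec_in_span_q[OF j IH] in simp)
  then have "krylov_vec ` {0..<Suc j} \<subseteq> span_q (Suc j)" by auto
  then have "span_krylov (Suc j) \<subseteq> span_q (Suc j)"
    unfolding span_krylov_def span_q_def by (intro VS.span_subsetI) auto
  moreover have "q i \<in> span_krylov (Suc j)" if "i < Suc j" for i
  proof (cases "i = j")
    case False
    then have "q i \<in> span_q j" using that by (simp add: q_in_span_q)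
    then show ?thesis unfolding IH[symmetric] by (rule span_krylov_mono) simp
  qed (use q_in_span_krylov[OF j IH] in simp)
  then have "q ` {0..<Suc j} \<subseteq> span_krylov (Suc j)" by auto
  then have "span_q (Suc j) \<subseteq> span_krylov (Suc j)"
    unfolding span_krylov_def span_q_def by (intro VS.span_subsetI) auto
  ultimately show ?case by blast
qed

lemma krylov_eq_range: "krylov N (schur M A C) b k = {Q k *\<^sub>v z | z. z \<in> carrier_vec k}"
  unfolding krylov_eq_span_krylov span_krylov_eq_span_q[OF order_refl] span_q_eq_range ..

end

theorem theorem4p1:
  fixes M A C N :: "real mat" and b :: "real vec" and m n k :: nat
  assumes M: "M \<in> carrier_mat m m"
    and M_pd: "\<forall>x \<in> carrier_vec m. x \<noteq> 0\<^sub>v m \<longrightarrow> x \<bullet> (M *\<^sub>v x) > 0"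
    and A: "A \<in> carrier_mat m n" and nm: "n \<le> m"
    and A_rank: "vec_space.rank m A = n"
    and C: "C \<in> carrier_mat n n" and C_sym: "transpose_mat C = C"
    and C_psd: "\<forall>x \<in> carrier_vec n. x \<bullet> (C *\<^sub>v x) \<ge> 0"
    and b: "b \<in> carrier_vec n" and b_nz: "b \<noteq> 0\<^sub>v n"
    and N: "N \<in> carrier_mat n n" and N_sym: "transpose_mat N = N"
    and N_pd: "\<forall>x \<in> carrier_vec n. x \<noteq> 0\<^sub>v n \<longrightarrow> x \<bullet> (N *\<^sub>v x) > 0"
    and k: "1 \<le> k"
    and defined: "\<forall>j \<in> {2..k}. craig_beta M A C N b j \<noteq> 0"
  shows "invertible_mat (nscraig_H M A C N b k)
    \<and> nscraig_p M A C N b k \<in> krylov N (schur M A C) b k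
    \<and> (\<forall>x \<in> krylov N (schur M A C) b k.
          (- b - schur M A C *\<^sub>v nscraig_p M A C N b k) \<bullet> x = 0)
    \<and> (\<forall>p \<in> krylov N (schur M A C) b k.
          (\<forall>x \<in> krylov N (schur M A C) b k. (- b - schur M A C *\<^sub>v p) \<bullet> x = 0)
          \<longrightarrow> p = nscraig_p M A C N b k)
    \<and> nscraig_u M A C N b k = - (minv M *\<^sub>v (A *\<^sub>v nscraig_p M A C N b k))"
proof -
  interpret nscraig M A C N b m n k
    using inj_mult_mat_vec_if_full_rank[OF A A_rank] M M_pd A C C_psd b b_nz N N_sym N_pd k defined
    by unfold_locales (auto simp: pos_def_mat_def)
  let ?y = "nscraig_y M A C N b k" and ?K = "krylov N (schur M A C) b k"
  have y: "?y \<in> carrier_vec k" and galerkin: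
    "(transpose_mat (Q k) * (schur M A C * Q k)) *\<^sub>v ?y = transpose_mat (Q k) *\<^sub>v (- b)"
    using nscraig_y_galerkin unfolding Hk_Bk_eq S_def by auto
  have p: "nscraig_p M A C N b k = Q k *\<^sub>v ?y" unfolding nscraig_p_def nscraig_Q_eq ..
  have G_inj: "\<forall>z \<in> carrier_vec k. (transpose_mat (Q k) * (schur M A C * Q k)) *\<^sub>v z = 0\<^sub>v k \<longrightarrow> z = 0\<^sub>v k"
    using pos_def_mat_inj[OF Hk_Bk_pos_def] unfolding Hk_Bk_eq S_def by blast
  note S = S_carrier[unfolded S_def] and Kk = krylov_eq_range and minus_b = uminus_carrier_vec[THEN iffD2, OF b]
  show ?thesis
  proof (intro conjI)
    show "invertible_mat (nscraig_H M A C N b k)"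
      using invertible_mat_if_det_nonzero[OF Hk_carrier det_Hk_nonzero] unfolding Hk_def .
    show "nscraig_p M A C N b k \<in> ?K" unfolding Kk p using y by blast
    show "\<forall>x \<in> ?K. (- b - schur M A C *\<^sub>v nscraig_p M A C N b k) \<bullet> x = 0"
      unfolding Kk p using galerkin_condition_iff[OF Q_carrier S minus_b y] galerkin by simp
    show "\<forall>p' \<in> ?K. (\<forall>x \<in> ?K. (- b - schur M A C *\<^sub>v p') \<bullet> x = 0) \<longrightarrow> p' = nscraig_p M A C N b k"
      unfolding Kk p using galerkin_solution_unique[OF Q_carrier S minus_b G_inj y galerkin] by blast
  qed (simp add: nscraig_u_def)
qed

end
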